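(* Let $A$ be a $d$-dimensional polystochastic matrix of order $4$. Suppose that for some tuple $\mathcal{E}\in\{1,2,3\}^d$ and some $y\in\{0,1\}^d$ the subcube $C_y$ of the partition defined by $\mathcal{E}$ satisfies $w(C_y)=0$ or $w(C_y)=2^{d-1}$. Then every line of $A$ contains at most two nonzero entries.
   Context: $A=(a_\alpha)_{\alpha\in\{0,1,2,3\}^d}$; a line is the set of indices obtained by fixing all coordinates but one; $A$ is polystochastic if it is nonnegative and every line sums to $1$. Define $p_1,p_2,p_3:\{0,1,2,3\}\to\{0,1\}$ by $p_1(0)=p_1(1)=0$, $p_1(2)=p_1(3)=1$; $p_2(0)=p_2(2)=0$, $p_2(1)=p_2(3)=1$; $p_3(0)=p_3(3)=0$, $p_3(1)=p_3(2)=1$. For $\mathcal{E}=(\varepsilon_1,\dots,\varepsilon_d)\in\{1,2,3\}^d$ and $y\in\{0,1\}^d$, the subcube $C_y$ is the submatrix of $A$ on the index set $\{\alpha: p_{\varepsilon_i}(\alpha_i)=y_i \text{ for all } i\}$ (a $d$-dimensional submatrix of order $2$). The weight $w(C)$ of a nonnegative matrix $C$ is the sum of its entries. *)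

theory Defs
  imports Complex_Main
begin

text \<open>Multi-indices alpha in {0,1,2,3}^d, represented as functions nat => nat
  with alpha i < 4 for i < d and alpha i = 0 for i >= d (canonical padding).\<close>
definition idx :: "nat \<Rightarrow> (nat \<Rightarrow> nat) set" where
  "idx d = {\<alpha>. (\<forall>i<d. \<alpha> i < 4) \<and> (\<forall>i\<ge>d. \<alpha> i = 0)}"

definition line :: "nat \<Rightarrow> (nat \<Rightarrow> nat) \<Rightarrow> (nat \<Rightarrow> nat) set" where
  "line i \<alpha> = (\<lambda>k. \<alpha>(i := k)) ` {..<4}"

definition polystochastic :: "nat \<Rightarrow> ((nat \<Rightarrow> nat) \<Rightarrow> real) \<Rightarrow> bool" where
  "polystochastic d A \<longleftrightarrow>
     (\<forall>\<alpha>\<in>idx d. A \<alpha> \<ge> 0) \<and>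
     (\<forall>i<d. \<forall>\<alpha>\<in>idx d. (\<Sum>\<beta>\<in>line i \<alpha>. A \<beta>) = 1)"

fun p :: "nat \<Rightarrow> nat \<Rightarrow> nat" where
  "p (Suc 0) x = (if x = 2 \<or> x = 3 then 1 else 0)"
| "p (Suc (Suc 0)) x = (if x = 1 \<or> x = 3 then 1 else 0)"
| "p (Suc (Suc (Suc 0))) x = (if x = 1 \<or> x = 2 then 1 else 0)"
| "p _ x = 0"

definition subcube :: "nat \<Rightarrow> (nat \<Rightarrow> nat) \<Rightarrow> (nat \<Rightarrow> nat) \<Rightarrow> (nat \<Rightarrow> nat) set" where
  "subcube d E y = {\<alpha>\<in>idx d. \<forall>i<d. p (E i) (\<alpha> i) = y i}"

definition weight :: "((nat \<Rightarrow> nat) \<Rightarrow> real) \<Rightarrow> (nat \<Rightarrow> nat) set \<Rightarrow> real" where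
  "weight A S = (\<Sum>\<alpha>\<in>S. A \<alpha>)"

end

theory Submission
  imports Defs "HOL-Library.FuncSet"
begin

text \<open>Two subcubes whose labels differ only in coordinate \<open>i\<close> together consist of
  exactly \<open>2^(d-1)\<close> complete lines in direction \<open>i\<close>, so their weights add up to
  \<open>2^(d-1)\<close>. Flipping labels one coordinate at a time, the weights of all subcubes lie in
  \<open>{0, 2^(d-1)}\<close> as soon as one does. A line in direction \<open>i\<close> meets exactly two such
  adjacent subcubes, in two entries each, and one of them then has weight \<open>0\<close>; by
  nonnegativity the line vanishes there.\<close>

definition padded_Pi :: "'a set \<Rightarrow> ('a \<Rightarrow> 'b set) \<Rightarrow> ('a \<Rightarrow> 'b::zero) set" where
  "padded_Pi I S = {\<gamma>. (\<forall>j\<in>I. \<gamma> j \<in> S j) \<and> (\<forall>j. j \<notin> I \<longrightarrow> \<gamma> j = 0)}"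

lemma bij_betw_restrict_padded_Pi: "bij_betw (\<lambda>\<gamma>. restrict \<gamma> I) (padded_Pi I S) (Pi\<^sub>E I S)"
  by (rule bij_betw_byWitness[where f' = "\<lambda>f j. if j \<in> I then f j else 0"])
    (auto simp: padded_Pi_def PiE_def extensional_def)

lemma finite_padded_Pi: "finite I \<Longrightarrow> (\<And>j. j \<in> I \<Longrightarrow> finite (S j)) \<Longrightarrow> finite (padded_Pi I S)"
  using bij_betw_finite[OF bij_betw_restrict_padded_Pi] finite_PiE by blast

lemma card_padded_Pi: "finite I \<Longrightarrow> card (padded_Pi I S) = (\<Prod>j\<in>I. card (S j))"
  using bij_betw_same_card[OF bij_betw_restrict_padded_Pi] card_PiE by metis

lemma idx_eq_padded_Pi: "idx d = padded_Pi {..<d} (\<lambda>_. {..<4})"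
  by (auto simp: idx_def padded_Pi_def)

lemma finite_idx: "finite (idx d)"
  by (simp add: idx_eq_padded_Pi finite_padded_Pi)

lemma finite_subcube: "finite (subcube d E y)"
  using finite_idx by (rule rev_finite_subset) (auto simp: subcube_def)

lemma subcube_cong: "(\<And>j. j < d \<Longrightarrow> y j = y' j) \<Longrightarrow> subcube d E y = subcube d E y'"
  by (simp add: subcube_def)

lemma p_range: "p e a \<in> {0, 1}"
  by (cases "(e, a)" rule: p.cases) auto

lemma p_eq: "p e a = (if e = 1 then of_bool (a = 2 \<or> a = 3) else if e = 2 then of_bool (a = 1 \<or> a = 3)
    else if e = 3 then of_bool (a = 1 \<or> a = 2) else 0)"
  by (cases "(e, a)" rule: p.cases) (auto simp: numeral_2_eq_2 numeral_3_eq_3)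

lemma card_p_fibre:
  assumes "e \<in> {1, 2, 3}" "b \<in> {0, 1}"
  shows "card {a. a < 4 \<and> p e a = b} = 2"
proof -
  have "{a. a < 4 \<and> p e a = b} = set (filter (\<lambda>a. p e a = b) [0..<4])" by auto
  moreover have "[0..<4] = [0, 1, 2, 3 :: nat]" by (simp add: upt_rec)
  moreover have "length (filter (\<lambda>a. p e a = b) [0, 1, 2, 3]) = 2"
    using assms by (auto simp: p_eq)
  ultimately show ?thesis by (simp add: distinct_card del: upt_Suc)
qed

lemma weight_Union_lines:
  assumes P: "polystochastic d A" and i: "i < d" and G: "G \<subseteq> idx d" "\<forall>\<gamma>\<in>G. \<gamma> i = 0"
  shows "weight A (\<Union>\<gamma>\<in>G. line i \<gamma>) = card G"
proof -
  have "finite G" using G(1) finite_idx by (rule finite_subset)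
  moreover have "line i \<gamma> \<inter> line i \<gamma>' = {}" if "\<gamma> \<in> G" "\<gamma>' \<in> G" "\<gamma> \<noteq> \<gamma>'" for \<gamma> \<gamma>'
  proof -
    have "\<gamma>(i := k) \<noteq> \<gamma>'(i := k')" for k k'
      using that G(2) by (metis fun_upd_triv fun_upd_upd)
    then show ?thesis by (auto simp: line_def)
  qed
  ultimately have "weight A (\<Union>\<gamma>\<in>G. line i \<gamma>) = (\<Sum>\<gamma>\<in>G. \<Sum>\<beta>\<in>line i \<gamma>. A \<beta>)"
    unfolding weight_def by (intro sum.UNION_disjoint) (auto simp: line_def)
  also have "\<dots> = (\<Sum>\<gamma>\<in>G. 1)"
    using P i G(1) by (intro sum.cong) (auto simp: polystochastic_def)
  finally show ?thesis by simp
qed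

lemma subcube_pair_eq_Union_lines:
  fixes E :: "nat \<Rightarrow> nat"
  assumes i: "i < d" and y: "y i \<in> {0, 1}"
  defines "G \<equiv> padded_Pi ({..<d} - {i}) (\<lambda>j. {a. a < 4 \<and> p (E j) a = y j})"
  shows "subcube d E y \<union> subcube d E (y(i := 1 - y i)) = (\<Union>\<gamma>\<in>G. line i \<gamma>)"
proof (intro equalityI subsetI)
  fix \<beta> assume "\<beta> \<in> subcube d E y \<union> subcube d E (y(i := 1 - y i))"
  then have "\<beta> \<in> idx d" "\<beta>(i := 0) \<in> G"
    using i by (auto simp: G_def padded_Pi_def subcube_def idx_def)
  moreover have "\<beta> \<in> line i (\<beta>(i := 0))" if "\<beta> \<in> idx d"
    using that i by (auto simp: line_def idx_def intro: rev_image_eqI[of "\<beta> i"])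
  ultimately show "\<beta> \<in> (\<Union>\<gamma>\<in>G. line i \<gamma>)" by blast
next
  fix \<beta> assume "\<beta> \<in> (\<Union>\<gamma>\<in>G. line i \<gamma>)"
  then obtain \<gamma> k where "\<gamma> \<in> G" "k < 4" and \<beta>: "\<beta> = \<gamma>(i := k)"
    by (auto simp: line_def)
  then have "\<beta> \<in> idx d" "\<forall>j<d. j \<noteq> i \<longrightarrow> p (E j) (\<beta> j) = y j"
    using i by (auto simp: G_def padded_Pi_def idx_def)
  moreover have "p (E i) (\<beta> i) = y i \<or> p (E i) (\<beta> i) = 1 - y i"
    using y p_range[of "E i" "\<beta> i"] by auto
  ultimately show "\<beta> \<in> subcube d E y \<union> subcube d E (y(i := 1 - y i))"
    by (auto simp: subcube_def)
qed

lemma weight_adjacent_subcubes: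
  assumes P: "polystochastic d A" and E: "\<forall>j<d. E j \<in> {1, 2, 3}"
    and y: "\<forall>j<d. y j \<in> {0, 1}" and i: "i < d"
  shows "weight A (subcube d E y) + weight A (subcube d E (y(i := 1 - y i))) = 2 ^ (d - 1)"
proof -
  define G where "G = padded_Pi ({..<d} - {i}) (\<lambda>j. {a. a < 4 \<and> p (E j) a = y j})"
  have "card G = (\<Prod>j\<in>{..<d} - {i}. 2)"
    unfolding G_def using E y by (simp add: card_padded_Pi card_p_fibre)
  also have "\<dots> = 2 ^ (d - 1)" using i by simp
  finally have card_G: "card G = 2 ^ (d - 1)" .
  have G: "G \<subseteq> idx d" "\<forall>\<gamma>\<in>G. \<gamma> i = 0"
    by (fastforce simp: G_def padded_Pi_def idx_def)+
  have "subcube d E y \<inter> subcube d E (y(i := 1 - y i)) = {}"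
    using y i by (auto simp: subcube_def)
  then have "weight A (subcube d E y) + weight A (subcube d E (y(i := 1 - y i)))
      = weight A (subcube d E y \<union> subcube d E (y(i := 1 - y i)))"
    unfolding weight_def by (simp add: sum.union_disjoint finite_subcube)
  also have "\<dots> = card G"
    using subcube_pair_eq_Union_lines[OF i, of y E] y i weight_Union_lines[OF P i G]
    by (simp add: G_def)
  finally show ?thesis by (simp add: card_G)
qed

lemma weight_subcube_extreme_propagates:
  assumes P: "polystochastic d A" and E: "\<forall>j<d. E j \<in> {1, 2, 3}"
    and y: "\<forall>j<d. y j \<in> {0, 1}" and extreme: "weight A (subcube d E y) \<in> {0, 2 ^ (d - 1)}"
    and y': "\<forall>j<d. y' j \<in> {0, 1}"
  shows "weight A (subcube d E y') \<in> {0, 2 ^ (d - 1)}"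
proof -
  have "weight A (subcube d E y') \<in> {0, 2 ^ (d - 1)}"
    if "finite K" "\<forall>j<d. y' j \<in> {0, 1}" "\<forall>j<d. j \<notin> K \<longrightarrow> y' j = y j" for K y'
    using that
  proof (induction K arbitrary: y' rule: finite_induct)
    case empty
    then show ?case using extreme subcube_cong[of d y' y] by simp
  next
    case (insert k K)
    show ?case
    proof (cases "k < d \<and> y' k \<noteq> y k")
      case True
      let ?y'' = "y'(k := 1 - y' k)"
      have y'': "\<forall>j<d. ?y'' j \<in> {0, 1}" using insert.prems(1) by auto
      have "?y'' k = y k"
        using True insert.prems(1)[rule_format, of k] y[rule_format, of k] by auto
      then have "weight A (subcube d E ?y'') \<in> {0, 2 ^ (d - 1)}"
        using insert.prems by (intro insert.IH) auto
      moreover have "?y''(k := 1 - ?y'' k) = y'"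
        using True insert.prems(1)[rule_format, of k] by auto
      with weight_adjacent_subcubes[OF P E y''] True
      have "weight A (subcube d E ?y'') + weight A (subcube d E y') = 2 ^ (d - 1)"
        by metis
      ultimately show ?thesis by auto
    next
      case False
      then show ?thesis using insert by auto
    qed
  qed
  from this[of "{j. j < d}"] y' show ?thesis by simp
qed

lemma weight_subcube_zero_imp_vanish:
  assumes "polystochastic d A" "weight A (subcube d E y) = 0" "\<beta> \<in> subcube d E y"
  shows "A \<beta> = 0"
proof -
  have "\<forall>\<beta>\<in>subcube d E y. 0 \<le> A \<beta>"
    using assms(1) by (auto simp: polystochastic_def subcube_def)
  then show ?thesis
    using assms(2,3) by (simp add: weight_def sum_nonneg_eq_0_iff finite_subcube)
qed

lemma card_line_support_le_two:
  assumes P: "polystochastic d A" and E: "\<forall>j<d. E j \<in> {1, 2, 3}"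
    and \<alpha>: "\<alpha> \<in> idx d" and i: "i < d" and b: "b \<in> {0, 1}"
    and zero: "weight A (subcube d E ((\<lambda>j. p (E j) (\<alpha> j))(i := b))) = 0"
  shows "card {\<beta>\<in>line i \<alpha>. A \<beta> \<noteq> 0} \<le> 2"
proof -
  let ?M = "{k. k < 4 \<and> p (E i) k = 1 - b}"
  have "\<alpha>(i := k) \<in> subcube d E ((\<lambda>j. p (E j) (\<alpha> j))(i := b))" if "k < 4" "p (E i) k = b" for k
    using \<alpha> i that by (auto simp: subcube_def idx_def)
  then have "A (\<alpha>(i := k)) = 0" if "k < 4" "p (E i) k \<noteq> 1 - b" for k
    using that b p_range[of "E i" k] weight_subcube_zero_imp_vanish[OF P zero] by auto
  then have "{\<beta>\<in>line i \<alpha>. A \<beta> \<noteq> 0} \<subseteq> (\<lambda>k. \<alpha>(i := k)) ` ?M"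
    by (auto simp: line_def)
  then have "card {\<beta>\<in>line i \<alpha>. A \<beta> \<noteq> 0} \<le> card ((\<lambda>k. \<alpha>(i := k)) ` ?M)"
    by (intro card_mono) auto
  also have "\<dots> \<le> card ?M"
    by (rule card_image_le) simp
  also have "card ?M = 2" using E i b by (intro card_p_fibre) auto
  finally show ?thesis .
qed

theorem mainTheorem6:
  fixes d :: nat and A :: "(nat \<Rightarrow> nat) \<Rightarrow> real" and E y :: "nat \<Rightarrow> nat"
  assumes "polystochastic d A"
    and "\<forall>i<d. E i \<in> {1, 2, 3}"
    and "\<forall>i<d. y i \<in> {0, 1}"
    and "weight A (subcube d E y) = 0 \<or> weight A (subcube d E y) = 2 ^ (d - 1)"
  shows "\<forall>i<d. \<forall>\<alpha>\<in>idx d. card {\<beta>\<in>line i \<alpha>. A \<beta> \<noteq> 0} \<le> 2"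
proof (intro allI impI ballI)
  fix i \<alpha> assume i: "i < d" and \<alpha>: "\<alpha> \<in> idx d"
  define z where "z b = (\<lambda>j. p (E j) (\<alpha> j))(i := b)" for b
  have z: "\<forall>j<d. z b j \<in> {0, 1}" if "b \<in> {0, 1}" for b
    using that p_range by (simp add: z_def)
  have extreme: "weight A (subcube d E (z b)) \<in> {0, 2 ^ (d - 1)}" if "b \<in> {0, 1}" for b
    using weight_subcube_extreme_propagates[OF assms(1-3) _ z[OF that]] assms(4) by auto
  have "(z 0)(i := 1 - z 0 i) = z 1" by (simp add: z_def)
  then have "weight A (subcube d E (z 0)) + weight A (subcube d E (z 1)) = 2 ^ (d - 1)"
    using weight_adjacent_subcubes[OF assms(1,2) z i, of 0] by simp
  then obtain b where "b \<in> {0, 1}" "weight A (subcube d E (z b)) = 0"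
    using extreme[of 0] extreme[of 1] by force
  then show "card {\<beta>\<in>line i \<alpha>. A \<beta> \<noteq> 0} \<le> 2"
    using card_line_support_le_two[OF assms(1,2) \<alpha> i] by (simp add: z_def)
qed

end
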